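(* Let $p(x)$ be a probability distribution on a feature space $\mathcal X$, let $p_{\mathrm{CM}}(y\mid x)$, $y\in\{+1,-1\}$, be a conditional probability distribution, and let $\mathcal D_{\mathrm{CM}}=p(x)\,p_{\mathrm{CM}}(y\mid x)$. Let $p_{\mathrm{TM}}(y\mid x;\theta)$ be a conditional probability distribution on $\{+1,-1\}$ (for a fixed parameter $\theta$) with $p_{\mathrm{TM}}(y\mid x;\theta)>0$ for all $x,y$. Then $$\Big(\mathbb E_{\mathcal D_{\mathrm{CM}}}\big[\mathbf 1_{p_{\mathrm{TM}}(y\mid x;\theta)\le 1/2}\big]\Big)^2\le\mathbb E_{p(x)}\Big[-p_{\mathrm{CM}}(+1\mid x)\log p_{\mathrm{TM}}(+1\mid x;\theta)-p_{\mathrm{CM}}(-1\mid x)\log p_{\mathrm{TM}}(-1\mid x;\theta)+2e^{-2|\log p_{\mathrm{TM}}(-1\mid x;\theta)-\log p_{\mathrm{TM}}(+1\mid x;\theta)|}\Big].$$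
   Context: Binary classification with labels $y\in\{+1,-1\}$; the target model classifies by $\mathrm{argmax}_y p_{\mathrm{TM}}(y\mid x;\theta)$, and the left-hand side is (an upper bound on) its misclassification error under $\mathcal D_{\mathrm{CM}}$. *)

theory Defs
  imports "HOL-Probability.Probability"
begin

definition labels :: "int set" where "labels = {1, -1}"

end

theory Submission
  imports Defs
begin

text \<open>The indicator of misclassification lies in [0,1], so the square of its expectation is
  at most the expectation itself. Pointwise, the misclassification probability of x is bounded
  by the cross entropy plus the margin term: the mass a on the label with model probability
  q \<le> 1/2 is paid for by -a ln q \<ge> a when q \<le> 1/e, and otherwise q > 1/3, where the margin
  term 2 (q/(1-q))^2 alone is at least 1/2 and -ln q \<ge> 1/2.\<close>

lemma sum_labels: "(\<Sum>y\<in>labels. f y) = f 1 + f (-1)"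
  by (simp add: labels_def)

lemma exp_neg_two_abs_ln_diff:
  fixes p q :: real
  assumes "0 < q" "q \<le> p"
  shows "exp (-2 * \<bar>ln p - ln q\<bar>) = (q / p)\<^sup>2"
proof -
  have "\<bar>ln p - ln q\<bar> = ln p - ln q" using assms by simp
  then have "exp (-2 * \<bar>ln p - ln q\<bar>) = exp (ln q - ln p) ^ 2"
    by (simp add: exp_of_nat_mult[symmetric] algebra_simps)
  also have "exp (ln q - ln p) = q / p" using assms by (simp add: exp_diff)
  finally show ?thesis .
qed

lemma mass_on_unlikely_label_le:
  fixes a p q :: real
  assumes a: "0 \<le> a" "a \<le> 1" and q: "0 < q" "q \<le> 1/2" "q + p = 1"
  shows "a \<le> - a * ln q + 2 * exp (-2 * \<bar>ln p - ln q\<bar>)"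
proof (cases "q \<le> exp (-1)")
  case True
  then have "ln q \<le> -1" using q by (metis ln_exp ln_le_cancel_iff exp_gt_zero)
  then have "a \<le> - a * ln q" using a mult_left_mono[of 1 "- ln q" a] by simp
  then show ?thesis by (smt (verit) exp_gt_zero)
next
  case False
  have "1 \<le> 3 * exp (-1::real)" using exp_le by (simp add: exp_minus field_simps)
  then have "1/3 < q" using False by linarith
  then have "1/2 < q / p" using q by (simp add: field_simps)
  then have "(1/2)\<^sup>2 \<le> (q / p)\<^sup>2" by (intro power_mono) auto
  then have margin: "1/2 \<le> 2 * exp (-2 * \<bar>ln p - ln q\<bar>)"
    using exp_neg_two_abs_ln_diff[of q p] q by (simp add: power2_eq_square)
  have "ln q \<le> q - 1" using q by (intro ln_le_minus_one) auto
  then have "a * (1/2) \<le> a * (- ln q)" using a q by (intro mult_left_mono) auto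
  then show ?thesis using margin a by linarith
qed

lemma misclassification_le_cross_entropy_plus_margin:
  fixes a b p q :: real
  assumes ab: "0 \<le> a" "0 \<le> b" "a + b = 1" and pq: "0 < q" "0 < p" "q + p = 1"
  shows "a * (if q \<le> 1/2 then 1 else 0) + b * (if p \<le> 1/2 then 1 else 0)
     \<le> - a * ln q - b * ln p + 2 * exp (-2 * \<bar>ln p - ln q\<bar>)"
proof -
  have cross_entropy_nonneg: "0 \<le> - a * ln q" "0 \<le> - b * ln p"
    using ab pq by (auto intro!: mult_nonneg_nonpos)
  consider "q < 1/2" | "p < 1/2" | "q = 1/2" "p = 1/2" using pq by linarith
  then show ?thesis
  proof cases
    case 1
    then show ?thesis
      using mass_on_unlikely_label_le[of a q p] ab pq cross_entropy_nonneg by auto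
  next
    case 2
    then show ?thesis
      using mass_on_unlikely_label_le[of b p q] ab pq cross_entropy_nonneg
      by (auto simp: abs_minus_commute)
  next
    case 3
    have "- a * ln q - b * ln p = (a + b) * ln 2"
      unfolding 3 by (simp add: ln_div algebra_simps)
    then show ?thesis using ab unfolding 3 by simp
  qed
qed

lemma (in prob_space) square_expectation_le_nn_integral:
  assumes "f \<in> borel_measurable M" "\<And>x. x \<in> space M \<Longrightarrow> 0 \<le> f x \<and> f x \<le> 1"
  shows "ennreal ((\<integral>x. f x \<partial>M)\<^sup>2) \<le> (\<integral>\<^sup>+x. ennreal (f x) \<partial>M)"
proof -
  have int: "integrable M f"
    using assms by (intro integrable_const_bound[where B=1]) auto
  have "0 \<le> (\<integral>x. f x \<partial>M)" using assms by (intro integral_nonneg_AE) auto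
  moreover have "(\<integral>x. f x \<partial>M) \<le> 1"
    using int assms integral_mono[of M f "\<lambda>_. 1"] by (simp add: prob_space)
  ultimately have "(\<integral>x. f x \<partial>M)\<^sup>2 \<le> (\<integral>x. f x \<partial>M)"
    by (simp add: power2_eq_square mult_left_le)
  also have "\<dots> = enn2real (\<integral>\<^sup>+x. ennreal (f x) \<partial>M)"
    using int assms by (simp add: nn_integral_eq_integral)
  finally show ?thesis
    using int assms by (simp add: nn_integral_eq_integral ennreal_leI)
qed

theorem theorem1:
  fixes M :: "'a measure"
    and pCM :: "'a \<Rightarrow> int \<Rightarrow> real"
    and pTM :: "'a \<Rightarrow> int \<Rightarrow> real"
  assumes "prob_space M"
    and "\<And>y. y \<in> labels \<Longrightarrow> (\<lambda>x. pCM x y) \<in> borel_measurable M"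
    and "\<And>y. y \<in> labels \<Longrightarrow> (\<lambda>x. pTM x y) \<in> borel_measurable M"
    and "\<And>x y. x \<in> space M \<Longrightarrow> y \<in> labels \<Longrightarrow> pCM x y \<ge> 0"
    and "\<And>x. x \<in> space M \<Longrightarrow> (\<Sum>y\<in>labels. pCM x y) = 1"
    and "\<And>x y. x \<in> space M \<Longrightarrow> y \<in> labels \<Longrightarrow> pTM x y > 0"
    and "\<And>x. x \<in> space M \<Longrightarrow> (\<Sum>y\<in>labels. pTM x y) = 1"
  shows "ennreal ((\<integral>x. (\<Sum>y\<in>labels. pCM x y * (if pTM x y \<le> 1/2 then 1 else 0)) \<partial>M) ^ 2)
    \<le> (\<integral>\<^sup>+x. ennreal (- pCM x 1 * ln (pTM x 1) - pCM x (-1) * ln (pTM x (-1))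
          + 2 * exp (-2 * \<bar>ln (pTM x (-1)) - ln (pTM x 1)\<bar>)) \<partial>M)"
proof -
  interpret prob_space M by fact
  have [measurable]: "(\<lambda>x. pCM x y) \<in> borel_measurable M" "(\<lambda>x. pTM x y) \<in> borel_measurable M"
    if "y \<in> {1, -1}" for y
    using that assms(2,3) by (auto simp: labels_def)
  have pCM: "pCM x 1 \<ge> 0" "pCM x (-1) \<ge> 0" "pCM x 1 + pCM x (-1) = 1"
    and pTM: "pTM x 1 > 0" "pTM x (-1) > 0" "pTM x 1 + pTM x (-1) = 1" if "x \<in> space M" for x
    using assms(4-7)[OF that] by (auto simp: labels_def sum_labels)
  define err where "err x = (\<Sum>y\<in>labels. pCM x y * (if pTM x y \<le> 1/2 then 1 else 0 :: real))" for x
  have err_eq: "err x = pCM x 1 * (if pTM x 1 \<le> 1/2 then 1 else 0)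
      + pCM x (-1) * (if pTM x (-1) \<le> 1/2 then 1 else 0)" for x
    by (simp add: err_def sum_labels)
  have "err \<in> borel_measurable M" unfolding err_eq[abs_def] by measurable
  moreover have "0 \<le> err x \<and> err x \<le> 1" if "x \<in> space M" for x
    using pCM[OF that] by (auto simp: err_eq)
  ultimately have "ennreal ((\<integral>x. err x \<partial>M)\<^sup>2) \<le> (\<integral>\<^sup>+x. ennreal (err x) \<partial>M)"
    by (rule square_expectation_le_nn_integral)
  also have "\<dots> \<le> (\<integral>\<^sup>+x. ennreal (- pCM x 1 * ln (pTM x 1) - pCM x (-1) * ln (pTM x (-1))
          + 2 * exp (-2 * \<bar>ln (pTM x (-1)) - ln (pTM x 1)\<bar>)) \<partial>M)"
    using misclassification_le_cross_entropy_plus_margin[OF pCM pTM]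
    by (intro nn_integral_mono ennreal_leI) (simp add: err_eq)
  finally show ?thesis by (simp add: err_def)
qed

end
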